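(* Let $n \geq 2$ and let $G$ be a graph that has the maximum atom-bond connectivity index among all graphs with $n$ vertices and edge-connectivity $1$. Then $G \cong K_n(1)$.
   Context: All graphs are simple and undirected. For a graph $G$ and a vertex $v$, $d(v)$ denotes the degree of $v$. The atom-bond connectivity (ABC) index is ${\rm ABC}(G)=\sum_{uv\in E(G)} \sqrt{\frac{d(u)+d(v)-2}{d(u)d(v)}}$. The edge-connectivity of a graph is the minimum number of edges whose removal disconnects it. For graphs $G,H$ on disjoint vertex sets, $G+H$ is their disjoint union, and the join $G\vee H$ is the graph on $V(G)\cup V(H)$ with edge set $E(G)\cup E(H)\cup\{uv: u\in V(G), v\in V(H)\}$. $K_n(k)$ denotes the graph $K_k \vee (K_1 + K_{n-k-1})$, i.e., the graph obtained from $K_{n-1}$ by adding one new vertex joined to exactly $k$ vertices of $K_{n-1}$. *)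

theory Defs
  imports Complex_Main
begin

definition simple_graph :: "'a set \<Rightarrow> 'a set set \<Rightarrow> bool" where
  "simple_graph V E \<longleftrightarrow> finite V \<and>
     E \<subseteq> {e. \<exists>u v. e = {u, v} \<and> u \<noteq> v \<and> u \<in> V \<and> v \<in> V}"

definition degree :: "'a set set \<Rightarrow> 'a \<Rightarrow> nat" where
  "degree E v = card {e \<in> E. v \<in> e}"

definition abc_index :: "'a set set \<Rightarrow> real" where
  "abc_index E = (\<Sum>e\<in>E. sqrt (((\<Sum>v\<in>e. real (degree E v)) - 2)
                                  / (\<Prod>v\<in>e. real (degree E v))))"

definition graph_connected :: "'a set \<Rightarrow> 'a set set \<Rightarrow> bool" where
  "graph_connected V E \<longleftrightarrow>
     (\<forall>u\<in>V. \<forall>v\<in>V. (u, v) \<in> {(x, y). {x, y} \<in> E}\<^sup>*)"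

definition edge_connectivity :: "'a set \<Rightarrow> 'a set set \<Rightarrow> nat" where
  "edge_connectivity V E =
     (LEAST k. \<exists>F. F \<subseteq> E \<and> card F = k \<and> \<not> graph_connected V (E - F))"

definition graph_iso :: "'a set \<Rightarrow> 'a set set \<Rightarrow> 'b set \<Rightarrow> 'b set set \<Rightarrow> bool" where
  "graph_iso V E V' E' \<longleftrightarrow> (\<exists>f. bij_betw f V V' \<and>
     (\<forall>u\<in>V. \<forall>v\<in>V. {u, v} \<in> E \<longleftrightarrow> {f u, f v} \<in> E'))"

definition Kn_k_vertices :: "nat \<Rightarrow> nat set" where
  "Kn_k_vertices n = {0..<n}"

definition Kn_k_edges :: "nat \<Rightarrow> nat \<Rightarrow> nat set set" where
  "Kn_k_edges n k =
     {{u, v} | u v. u < v \<and> v < n - 1} \<union> {{u, n - 1} | u. u < k}"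

end

theory Submission
  imports Defs "HOL-Combinatorics.Transposition"
begin

text \<open>Let uv be a bridge of an extremal graph G, with sides A containing u and B
  containing v. Joining two non-adjacent vertices on the same side keeps uv a bridge and
  strictly increases the ABC index: the term of the new edge exceeds the total decrease of
  the terms of the old edges at its endpoints. Hence A and B are cliques. If both have at
  least two vertices, bounding every term by the weight belonging to the least possible
  degrees shows that ABC(G) is smaller than ABC(K_n(1)). So one side is a single vertex,
  and G is K_n(1).\<close>

section \<open>The weight of an edge\<close>

definition abc_weight :: "real \<Rightarrow> real \<Rightarrow> real" where
  "abc_weight p q = sqrt ((p + q - 2) / (p * q))"

lemma abc_weight_commute: "abc_weight p q = abc_weight q p"
  unfolding abc_weight_def by (simp add: add.commute mult.commute)

lemma abc_weight_nonneg: "1 \<le> p \<Longrightarrow> 1 \<le> q \<Longrightarrow> 0 \<le> abc_weight p q"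
  unfolding abc_weight_def by simp

lemma abc_weight_le_1:
  assumes "1 \<le> p" "1 \<le> q"
  shows "abc_weight p q \<le> 1"
proof -
  have "0 \<le> (p - 1) * (q - 1)" using assms by simp
  then have "(p + q - 2) / (p * q) \<le> 1" using assms by (simp add: field_simps)
  then show ?thesis unfolding abc_weight_def by simp
qed

lemma abc_weight_2_left: "1 \<le> q \<Longrightarrow> abc_weight 2 q = 1 / sqrt 2"
  unfolding abc_weight_def by (simp add: real_sqrt_divide)

lemma abc_weight_1_left: "abc_weight 1 q = sqrt ((q - 1) / q)"
  unfolding abc_weight_def by simp

lemma abc_weight_diag: "1 \<le> x \<Longrightarrow> abc_weight x x = sqrt (2 * (x - 1)) / x"
  unfolding abc_weight_def by (simp add: real_sqrt_divide power2_eq_square[symmetric] algebra_simps)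

lemma abc_weight_antimono_left:
  assumes "0 < p" "p \<le> p'" "2 \<le> q"
  shows "abc_weight p' q \<le> abc_weight p q"
proof -
  have eq: "(r + q - 2) / (r * q) = 1 / q + (1 - 2 / q) / r" if "0 < r" for r
    using that assms by (simp add: field_simps)
  have "(1 - 2 / q) / p' \<le> (1 - 2 / q) / p"
    using assms by (intro divide_left_mono) (auto simp: field_simps)
  then show ?thesis
    unfolding abc_weight_def using eq[of p] eq[of p'] assms by simp
qed

lemma abc_weight_antimono:
  assumes "2 \<le> p" "p \<le> p'" "2 \<le> q" "q \<le> q'"
  shows "abc_weight p' q' \<le> abc_weight p q"
proof -
  have "abc_weight p' q' \<le> abc_weight p q'"
    using assms by (intro abc_weight_antimono_left) auto
  also have "\<dots> = abc_weight q' p" by (rule abc_weight_commute)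
  also have "\<dots> \<le> abc_weight q p"
    using assms by (intro abc_weight_antimono_left) auto
  finally show ?thesis by (simp add: abc_weight_commute)
qed

lemma abc_weight_le_inv_sqrt2:
  assumes "2 \<le> p" "2 \<le> q"
  shows "abc_weight p q \<le> 1 / sqrt 2"
  using abc_weight_antimono[OF order_refl assms(1) order_refl assms(2)] abc_weight_2_left[of 2]
  by simp

lemma sqrt_diff_le:
  fixes A B c m :: real
  assumes "0 \<le> B" "A - B \<le> c" "0 \<le> c" "m \<le> sqrt A" "m \<le> sqrt B" "0 < m"
  shows "sqrt A - sqrt B \<le> c / (2 * m)"
proof (cases "A \<le> B")
  case True
  then show ?thesis using assms by (simp add: order_trans[OF _ divide_nonneg_pos])
next
  case False
  have "(sqrt A - sqrt B) * (2 * m) \<le> (sqrt A - sqrt B) * (sqrt A + sqrt B)"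
    using False assms by (intro mult_left_mono) auto
  also have "\<dots> = A - B" using False assms by (simp add: algebra_simps)
  finally show ?thesis using assms by (simp add: field_simps)
qed

text \<open>Via sqrt A - sqrt B = (A - B) / (sqrt A + sqrt B), both roots being at least
  1/sqrt(d+1).\<close>
lemma abc_weight_increment_le:
  fixes d w :: real
  assumes "2 \<le> d" "1 \<le> w"
  shows "abc_weight d w - abc_weight (d + 1) w \<le> 1 / (2 * d * sqrt (d + 1))"
proof -
  define A where "A = (d + w - 2) / (d * w)"
  define B where "B = ((d + 1) + w - 2) / ((d + 1) * w)"
  have "A - B = (1 - 2 / w) / (d * (d + 1))"
  proof -
    have "d \<noteq> 0" "w \<noteq> 0" "d + 1 \<noteq> 0" using assms by auto
    then show ?thesis unfolding A_def B_def by (simp add: divide_simps) (simp add: algebra_simps)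
  qed
  also have "\<dots> \<le> 1 / (d * (d + 1))"
    using assms by (intro divide_right_mono) auto
  finally have AB: "A - B \<le> 1 / (d * (d + 1))" .
  have "d * w \<le> (d + w - 2) * (d + 1)"
  proof -
    have "2 * d \<le> d * d" using assms by (intro mult_right_mono) auto
    then have "d + 2 \<le> w + d * d" using assms by linarith
    then show ?thesis by (simp add: algebra_simps)
  qed
  then have mA: "1 / (d + 1) \<le> A" unfolding A_def using assms by (simp add: field_simps)
  have mB: "1 / (d + 1) \<le> B" unfolding B_def using assms by (simp add: divide_simps)
  have "abc_weight d w - abc_weight (d + 1) w = sqrt A - sqrt B"
    unfolding abc_weight_def A_def B_def by (simp add: add_ac)
  also have "\<dots> \<le> (1 / (d * (d + 1))) / (2 * sqrt (1 / (d + 1)))"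
    using assms mA mB AB unfolding B_def by (intro sqrt_diff_le) auto
  also have "\<dots> = 1 / (2 * d * sqrt (d + 1))"
  proof -
    have "sqrt (d + 1) * sqrt (d + 1) = d + 1" "0 < d * 2 + d * (d * 2)"
      using assms by (simp_all add: add_pos_pos)
    then show ?thesis using assms by (simp add: real_sqrt_divide field_simps)
  qed
  finally show ?thesis .
qed

text \<open>An upper bound for the total decrease of the weights of the d edges at a vertex
  when its degree rises from d to d+1.\<close>
definition increment_loss :: "nat \<Rightarrow> real" where
  "increment_loss d = (if d = 1 then 1 - 1 / sqrt 2 else 1 / (2 * sqrt (real d + 1)))"

lemma abc_weight_increment_ge:
  assumes "1 \<le> d" "1 \<le> w"
  shows "abc_weight (real d) w - increment_loss d / real d \<le> abc_weight (real d + 1) w"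
proof (cases "d = 1")
  case True
  then show ?thesis
    using abc_weight_le_1[of 1 w] abc_weight_2_left[of w] assms unfolding increment_loss_def
    by simp
next
  case False
  then have "2 \<le> real d" using assms by simp
  from abc_weight_increment_le[OF this assms(2)] False show ?thesis
    unfolding increment_loss_def by (simp add: mult_ac)
qed

lemma sqrt2_bounds: "1.41 < sqrt (2::real)" "sqrt (2::real) < 1.42"
  by (rule real_less_rsqrt real_less_lsqrt; simp add: power2_eq_square)+

lemma increment_loss_le:
  assumes "1 \<le> d"
  shows "increment_loss d \<le> 0.3"
proof (cases "d = 1")
  case True
  then show ?thesis using sqrt2_bounds unfolding increment_loss_def by (simp add: field_simps)
next
  case False
  have "1.7 \<le> sqrt (real d + 1)"
    by (rule real_le_rsqrt) (use assms False in \<open>simp add: power2_eq_square\<close>)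
  then show ?thesis using False unfolding increment_loss_def by (simp add: field_simps)
qed

lemma increment_loss_lt_abc_weight:
  assumes "1 \<le> dx" "1 \<le> dy"
  shows "increment_loss dx + increment_loss dy < abc_weight (real dx + 1) (real dy + 1)"
proof -
  consider "dx = 1 \<or> dy = 1" | "2 \<le> dx" "2 \<le> dy" using assms by linarith
  then show ?thesis
  proof cases
    case 1
    have "0.7 < 1 / sqrt (2::real)" using sqrt2_bounds by (simp add: field_simps)
    moreover have "abc_weight (real dx + 1) (real dy + 1) = 1 / sqrt 2"
      using 1 abc_weight_2_left[of "real dx + 1"] abc_weight_2_left[of "real dy + 1"]
      by (auto simp: abc_weight_commute)
    ultimately show ?thesis using increment_loss_le[OF assms(1)] increment_loss_le[OF assms(2)]
      by linarith
  next
    case 2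
    define P Q where "P = real dx + 1" and "Q = real dy + 1"
    have P3: "3 \<le> P" and Q3: "3 \<le> Q" using 2 unfolding P_def Q_def by auto
    define \<alpha> \<beta> where "\<alpha> = 1 / (2 * sqrt P)" and "\<beta> = 1 / (2 * sqrt Q)"
    have loss: "increment_loss dx + increment_loss dy = \<alpha> + \<beta>"
      using 2 unfolding increment_loss_def \<alpha>_def \<beta>_def P_def Q_def by simp
    have "(\<alpha> + \<beta>)\<^sup>2 \<le> 2 * (\<alpha>\<^sup>2 + \<beta>\<^sup>2)"
      using sum_squares_ge_zero[of "\<alpha> - \<beta>" 0] by (simp add: power2_eq_square algebra_simps)
    also have "\<dots> = (P + Q) / (2 * P * Q)"
    proof -
      have "\<alpha>\<^sup>2 = 1 / (4 * P)" "\<beta>\<^sup>2 = 1 / (4 * Q)"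
        using P3 Q3 unfolding \<alpha>_def \<beta>_def by (simp_all add: power_divide power_mult_distrib)
      then show ?thesis using P3 Q3 by (simp add: field_simps)
    qed
    also have "\<dots> < (P + Q - 2) / (P * Q)" using P3 Q3 by (simp add: divide_simps)
    finally have "\<alpha> + \<beta> < sqrt ((P + Q - 2) / (P * Q))"
      using P3 Q3 unfolding \<alpha>_def \<beta>_def by (intro real_less_rsqrt) auto
    then show ?thesis using loss unfolding abc_weight_def P_def Q_def by simp
  qed
qed

section \<open>Adding an edge\<close>

lemma simple_graph_edgeE:
  assumes "simple_graph V E" "e \<in> E"
  obtains u v where "e = {u, v}" "u \<noteq> v" "u \<in> V" "v \<in> V"
  using assms unfolding simple_graph_def by blast

lemma simple_graph_finite_edges: "simple_graph V E \<Longrightarrow> finite E"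
  unfolding simple_graph_def by (rule finite_subset[of _ "Pow V"]) auto

definition abc_term :: "'a set set \<Rightarrow> 'a set \<Rightarrow> real" where
  "abc_term E e = sqrt (((\<Sum>v\<in>e. real (degree E v)) - 2) / (\<Prod>v\<in>e. real (degree E v)))"

lemma abc_index_eq_sum: "abc_index E = (\<Sum>e\<in>E. abc_term E e)"
  unfolding abc_index_def abc_term_def ..

lemma abc_term_doubleton: "u \<noteq> v \<Longrightarrow> abc_term E {u, v} = abc_weight (degree E u) (degree E v)"
  unfolding abc_term_def abc_weight_def by simp

lemma abc_term_cong: "(\<And>v. v \<in> e \<Longrightarrow> degree E' v = degree E v) \<Longrightarrow> abc_term E' e = abc_term E e"
  unfolding abc_term_def by (simp cong: sum.cong prod.cong)

lemma degree_insert_edge: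
  assumes "finite E" "{x, y} \<notin> E"
  shows "degree (insert {x, y} E) w = degree E w + (if w = x \<or> w = y then 1 else 0)"
proof (cases "w = x \<or> w = y")
  case True
  then have "{e \<in> insert {x, y} E. w \<in> e} = insert {x, y} {e \<in> E. w \<in> e}" by auto
  then show ?thesis unfolding degree_def using True assms by simp
next
  case False
  then have "{e \<in> insert {x, y} E. w \<in> e} = {e \<in> E. w \<in> e}" by auto
  then show ?thesis unfolding degree_def using False by simp
qed

lemma degree_ge_1:
  assumes "finite E" "e \<in> E" "w \<in> e"
  shows "1 \<le> degree E w"
proof -
  have "{f \<in> E. w \<in> f} \<noteq> {}" "finite {f \<in> E. w \<in> f}" using assms by auto
  then show ?thesis unfolding degree_def by (simp add: Suc_le_eq card_gt_0_iff)
qed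

lemma card_le_degree:
  assumes "finite E" "finite S" "p \<notin> S" "\<And>q. q \<in> S \<Longrightarrow> {p, q} \<in> E"
  shows "card S \<le> degree E p"
proof -
  have "inj_on (\<lambda>q. {p, q}) S"
    using assms(3) by (intro inj_onI) (auto simp: doubleton_eq_iff)
  then have "card S = card ((\<lambda>q. {p, q}) ` S)" by (simp add: card_image)
  also have "\<dots> \<le> card {e \<in> E. p \<in> e}" using assms(1,4) by (intro card_mono) auto
  finally show ?thesis unfolding degree_def .
qed

lemma degree_le_card_minus_1:
  assumes "simple_graph V E" "p \<in> V"
  shows "degree E p \<le> card V - 1"
proof -
  have finV: "finite V" using assms unfolding simple_graph_def by blast
  have "{e \<in> E. p \<in> e} \<subseteq> (\<lambda>q. {p, q}) ` (V - {p})"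
  proof
    fix e assume e: "e \<in> {e \<in> E. p \<in> e}"
    then have "e \<in> E" by simp
    then obtain a b where "e = {a, b}" "a \<noteq> b" "a \<in> V" "b \<in> V"
      by (rule simple_graph_edgeE[OF assms(1)])
    with e show "e \<in> (\<lambda>q. {p, q}) ` (V - {p})" by (auto simp: insert_commute)
  qed
  then have "degree E p \<le> card ((\<lambda>q. {p, q}) ` (V - {p}))"
    unfolding degree_def using finV by (intro card_mono) auto
  also have "\<dots> \<le> card (V - {p})" using finV by (intro card_image_le) auto
  finally show ?thesis using assms(2) finV by simp
qed

lemma abc_loss_at_endpoint:
  assumes "simple_graph V E" "{x, y} \<notin> E" "x \<noteq> y" "1 \<le> degree E x"
  shows "- increment_loss (degree E x)
           \<le> (\<Sum>e\<in>{e \<in> E. x \<in> e}. abc_term (insert {x, y} E) e - abc_term E e)"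
proof -
  let ?d = "degree E x"
  have finE: "finite E" using simple_graph_finite_edges[OF assms(1)] .
  have "- (increment_loss ?d / real ?d) \<le> abc_term (insert {x, y} E) e - abc_term E e"
    if e: "e \<in> {e \<in> E. x \<in> e}" for e
  proof -
    from e have "e \<in> E" by simp
    then obtain p q where "e = {p, q}" "p \<noteq> q" "p \<in> V" "q \<in> V"
      by (rule simple_graph_edgeE[OF assms(1)])
    then obtain w where w: "e = {x, w}" "w \<noteq> x" using e by auto
    have "w \<noteq> y" using w e assms(2) by auto
    then have "abc_term (insert {x, y} E) e = abc_weight (real ?d + 1) (degree E w)"
      using w degree_insert_edge[OF finE assms(2)] abc_term_doubleton[of x w]
      by (simp add: add.commute)
    moreover have "abc_term E e = abc_weight (real ?d) (degree E w)"
      using w abc_term_doubleton[of x w] by simp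
    moreover have "1 \<le> degree E w" using degree_ge_1[OF finE] e w by auto
    ultimately show ?thesis using abc_weight_increment_ge[OF assms(4), of "degree E w"] by simp
  qed
  then have "real (card {e \<in> E. x \<in> e}) * (- (increment_loss ?d / real ?d))
      \<le> (\<Sum>e\<in>{e \<in> E. x \<in> e}. abc_term (insert {x, y} E) e - abc_term E e)"
    by (rule sum_bounded_below)
  then show ?thesis using assms(4) unfolding degree_def by simp
qed

text \<open>Only edges at x or y change their terms, and the new edge outweighs the total loss.\<close>
lemma abc_index_insert_edge_less:
  assumes "simple_graph V E" "x \<noteq> y" "{x, y} \<notin> E" "1 \<le> degree E x" "1 \<le> degree E y"
  shows "abc_index E < abc_index (insert {x, y} E)"
proof -
  let ?E' = "insert {x, y} E" and ?Ex = "{e \<in> E. x \<in> e}" and ?Ey = "{e \<in> E. y \<in> e}"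
  define \<delta> where "\<delta> e = abc_term ?E' e - abc_term E e" for e
  have finE: "finite E" using simple_graph_finite_edges[OF assms(1)] .
  have disj: "?Ex \<inter> ?Ey = {}"
  proof -
    have "e = {x, y}" if "e \<in> E" "x \<in> e" "y \<in> e" for e
      using simple_graph_edgeE[OF assms(1) that(1)] that assms(2) by auto
    then show ?thesis using assms(3) by blast
  qed
  have unchanged: "\<delta> e = 0" if "e \<in> E - (?Ex \<union> ?Ey)" for e
  proof -
    have "degree ?E' v = degree E v" if "v \<in> e" for v
      using that \<open>e \<in> E - (?Ex \<union> ?Ey)\<close> degree_insert_edge[OF finE assms(3)] by auto
    then have "abc_term ?E' e = abc_term E e" by (rule abc_term_cong)
    then show ?thesis unfolding \<delta>_def by simp
  qed
  have "(\<Sum>e\<in>E. \<delta> e) = (\<Sum>e\<in>?Ex \<union> ?Ey. \<delta> e)"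
    using unchanged by (intro sum.mono_neutral_right[OF finE]) auto
  also have "\<dots> = (\<Sum>e\<in>?Ex. \<delta> e) + (\<Sum>e\<in>?Ey. \<delta> e)"
    using finE disj by (intro sum.union_disjoint) auto
  finally have "(\<Sum>e\<in>E. \<delta> e) = (\<Sum>e\<in>?Ex. \<delta> e) + (\<Sum>e\<in>?Ey. \<delta> e)" .
  moreover have "- increment_loss (degree E x) \<le> (\<Sum>e\<in>?Ex. \<delta> e)"
    unfolding \<delta>_def by (rule abc_loss_at_endpoint[OF assms(1,3,2,4)])
  moreover have "- increment_loss (degree E y) \<le> (\<Sum>e\<in>?Ey. \<delta> e)"
    using abc_loss_at_endpoint[of V E y x] assms unfolding \<delta>_def by (simp add: insert_commute)
  moreover have "abc_term ?E' {x, y} = abc_weight (real (degree E x) + 1) (real (degree E y) + 1)"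
    using abc_term_doubleton[OF assms(2)] degree_insert_edge[OF finE assms(3)]
    by (simp add: add.commute)
  moreover have "abc_index ?E' = abc_term ?E' {x, y} + abc_index E + (\<Sum>e\<in>E. \<delta> e)"
    unfolding abc_index_eq_sum \<delta>_def using finE assms(3) by (simp add: sum_subtractf)
  ultimately show ?thesis using increment_loss_lt_abc_weight[OF assms(4,5)] by linarith
qed

section \<open>Connectivity and bridges\<close>

lemma card_ge_2E:
  assumes "2 \<le> card V"
  obtains u v where "u \<in> V" "v \<in> V" "u \<noteq> v"
  using assms by (auto simp: numeral_2_eq_2 card_le_Suc_iff)

definition adj_rel :: "'a set set \<Rightarrow> 'a rel" where
  "adj_rel E = {(x, y). {x, y} \<in> E}"

lemma graph_connected_iff: "graph_connected V E \<longleftrightarrow> (\<forall>u\<in>V. \<forall>v\<in>V. (u, v) \<in> (adj_rel E)\<^sup>*)"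
  unfolding graph_connected_def adj_rel_def by simp

lemma graph_connected_mono:
  assumes "graph_connected V E" "E \<subseteq> F"
  shows "graph_connected V F"
proof -
  have "adj_rel E \<subseteq> adj_rel F" unfolding adj_rel_def using assms(2) by blast
  then show ?thesis using assms(1) rtrancl_mono unfolding graph_connected_iff by blast
qed

lemma adj_rel_rtrancl_closed:
  assumes "\<And>p q. {p, q} \<in> F \<Longrightarrow> p \<in> A \<longleftrightarrow> q \<in> A" "(a, b) \<in> (adj_rel F)\<^sup>*" "a \<in> A"
  shows "b \<in> A"
  using assms(2,3) by induction (use assms(1) in \<open>auto simp: adj_rel_def\<close>)

lemma not_graph_connected_if_closed:
  assumes "\<And>p q. {p, q} \<in> F \<Longrightarrow> p \<in> A \<longleftrightarrow> q \<in> A" "a \<in> V" "a \<in> A" "b \<in> V" "b \<notin> A"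
  shows "\<not> graph_connected V F"
proof
  assume "graph_connected V F"
  then have "(a, b) \<in> (adj_rel F)\<^sup>*" using assms(2,4) unfolding graph_connected_iff by blast
  then show False using adj_rel_rtrancl_closed[OF assms(1)] assms(3,5) by blast
qed

lemma edge_connectivity_eq_1D:
  assumes "2 \<le> card V" "edge_connectivity V E = 1"
  shows "graph_connected V E" "\<exists>e\<in>E. \<not> graph_connected V (E - {e})"
proof -
  define P where "P k \<longleftrightarrow> (\<exists>F. F \<subseteq> E \<and> card F = k \<and> \<not> graph_connected V (E - F))" for k
  have ec: "edge_connectivity V E = (LEAST k. P k)" unfolding edge_connectivity_def P_def ..
  obtain u v where "u \<in> V" "v \<in> V" "u \<noteq> v" using card_ge_2E[OF assms(1)] .
  then have "\<not> graph_connected V {}"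
    by (intro not_graph_connected_if_closed[of "{}" "{u}" u V v]) auto
  then have "P (card E)" unfolding P_def by (intro exI[of _ E]) simp
  then have "P 1" using LeastI[of P] ec assms(2) by simp
  then obtain F where F: "F \<subseteq> E" "card F = 1" "\<not> graph_connected V (E - F)"
    unfolding P_def by blast
  then obtain e where "F = {e}" by (meson card_1_singletonE)
  with F show "\<exists>e\<in>E. \<not> graph_connected V (E - {e})" by blast
  have "\<not> P 0" using not_less_Least[of 0 P] ec assms(2) by simp
  then show "graph_connected V E" unfolding P_def by (metis Diff_empty card.empty empty_subsetI)
qed

lemma edge_connectivity_eq_1I:
  assumes "simple_graph V E" "graph_connected V E" "e \<in> E" "\<not> graph_connected V (E - {e})"
  shows "edge_connectivity V E = 1"
  unfolding edge_connectivity_def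
proof (rule Least_equality)
  show "\<exists>F\<subseteq>E. card F = 1 \<and> \<not> graph_connected V (E - F)"
    using assms by (intro exI[of _ "{e}"]) auto
next
  fix k assume "\<exists>F\<subseteq>E. card F = k \<and> \<not> graph_connected V (E - F)"
  then obtain F where F: "F \<subseteq> E" "card F = k" "\<not> graph_connected V (E - F)" by blast
  then have "finite F" using simple_graph_finite_edges[OF assms(1)] finite_subset by blast
  then show "1 \<le> k" using F assms(2) by (cases "F = {}") (auto simp: Suc_le_eq card_gt_0_iff)
qed

lemma degree_ge_1_if_connected:
  assumes "simple_graph V E" "2 \<le> card V" "graph_connected V E" "x \<in> V"
  shows "1 \<le> degree E x"
proof -
  obtain y where y: "y \<in> V" "y \<noteq> x"
    using card_ge_2E[OF assms(2)] by metis
  have "(x, y) \<in> (adj_rel E)\<^sup>*" using assms(3,4) y unfolding graph_connected_iff by blast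
  then obtain z where "(x, z) \<in> adj_rel E"
    by (rule converse_rtranclE) (use y in auto)
  then show ?thesis
    using degree_ge_1[OF simple_graph_finite_edges[OF assms(1)]] unfolding adj_rel_def by blast
qed

lemma bridge_sidesE:
  assumes "simple_graph V E" "graph_connected V E" "e \<in> E" "\<not> graph_connected V (E - {e})"
  obtains A u v where "A \<subseteq> V" "u \<in> A" "v \<in> V" "v \<notin> A" "e = {u, v}"
    "\<And>p q. {p, q} \<in> E - {e} \<Longrightarrow> p \<in> A \<longleftrightarrow> q \<in> A"
proof -
  obtain w1 w2 where w: "w1 \<in> V" "w2 \<in> V" "(w1, w2) \<notin> (adj_rel (E - {e}))\<^sup>*"
    using assms(4) unfolding graph_connected_iff by blast
  define A where "A = {w \<in> V. (w1, w) \<in> (adj_rel (E - {e}))\<^sup>*}"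
  have closed: "p \<in> A \<longleftrightarrow> q \<in> A" if "{p, q} \<in> E - {e}" for p q
  proof -
    have "p \<in> V" "q \<in> V" "(p, q) \<in> adj_rel (E - {e})" "(q, p) \<in> adj_rel (E - {e})"
      using that simple_graph_edgeE[OF assms(1), of "{p, q}"]
      by (auto simp: adj_rel_def insert_commute doubleton_eq_iff)
    then show ?thesis unfolding A_def using rtrancl_into_rtrancl by (metis (lifting) mem_Collect_eq)
  qed
  obtain p q where pq: "e = {p, q}" "p \<noteq> q" "p \<in> V" "q \<in> V"
    by (rule simple_graph_edgeE[OF assms(1,3)])
  have "w1 \<in> A" "w2 \<notin> A" unfolding A_def using w by auto
  have "\<not> (p \<in> A \<longleftrightarrow> q \<in> A)"
  proof
    assume same: "p \<in> A \<longleftrightarrow> q \<in> A"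
    have "x \<in> A \<longleftrightarrow> y \<in> A" if "{x, y} \<in> E" for x y
      using closed[of x y] same that pq(1) by (cases "{x, y} = e") (auto simp: doubleton_eq_iff)
    from not_graph_connected_if_closed[OF this w(1) \<open>w1 \<in> A\<close> w(2) \<open>w2 \<notin> A\<close>] assms(2)
    show False by contradiction
  qed
  have "A \<subseteq> V" unfolding A_def by blast
  show ?thesis
  proof (cases "p \<in> A")
    case True
    then have "q \<notin> A" using \<open>\<not> (p \<in> A \<longleftrightarrow> q \<in> A)\<close> by blast
    from that[OF \<open>A \<subseteq> V\<close> True pq(4) this pq(1) closed] show ?thesis .
  next
    case False
    then have "q \<in> A" using \<open>\<not> (p \<in> A \<longleftrightarrow> q \<in> A)\<close> by blast
    moreover have "e = {q, p}" using pq(1) by (simp add: insert_commute)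
    ultimately show ?thesis using that[OF \<open>A \<subseteq> V\<close> _ pq(3) False _ closed] by blast
  qed
qed

section \<open>Two cliques joined by a bridge\<close>

definition two_cliques_bridge :: "'a set \<Rightarrow> 'a set \<Rightarrow> 'a \<Rightarrow> 'a \<Rightarrow> 'a set set \<Rightarrow> bool" where
  "two_cliques_bridge V A u v E \<longleftrightarrow>
     (\<forall>p\<in>V. \<forall>q\<in>V. {p, q} \<in> E \<longleftrightarrow> p \<noteq> q \<and> ((p \<in> A \<longleftrightarrow> q \<in> A) \<or> {p, q} = {u, v}))"

lemma two_cliques_bridge_swap:
  "two_cliques_bridge V A u v E \<Longrightarrow> two_cliques_bridge V (V - A) v u E"
  unfolding two_cliques_bridge_def by (simp add: insert_commute)

lemma two_cliques_bridgeI: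
  assumes "simple_graph V E" "{u, v} \<in> E" "u \<in> A" "v \<notin> A"
    and closed: "\<And>p q. {p, q} \<in> E - {{u, v}} \<Longrightarrow> p \<in> A \<longleftrightarrow> q \<in> A"
    and complete: "\<And>p q. p \<in> V \<Longrightarrow> q \<in> V \<Longrightarrow> p \<noteq> q \<Longrightarrow> (p \<in> A \<longleftrightarrow> q \<in> A) \<Longrightarrow> {p, q} \<in> E"
  shows "two_cliques_bridge V A u v E"
  unfolding two_cliques_bridge_def
proof (intro ballI iffI)
  fix p q assume "p \<in> V" "q \<in> V" and pq: "{p, q} \<in> E"
  have "p \<noteq> q"
    using simple_graph_edgeE[OF assms(1) pq] by (metis doubleton_eq_iff insert_absorb2)
  moreover have "(p \<in> A \<longleftrightarrow> q \<in> A) \<or> {p, q} = {u, v}"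
    using closed[of p q] pq by blast
  ultimately show "p \<noteq> q \<and> ((p \<in> A \<longleftrightarrow> q \<in> A) \<or> {p, q} = {u, v})" by blast
next
  fix p q assume "p \<in> V" "q \<in> V" "p \<noteq> q \<and> ((p \<in> A \<longleftrightarrow> q \<in> A) \<or> {p, q} = {u, v})"
  then show "{p, q} \<in> E" using complete[of p q] assms(2) by auto
qed

lemma card_ge_2_if_distinct:
  assumes "finite V" "u \<in> V" "v \<in> V" "u \<noteq> v"
  shows "2 \<le> card V"
proof -
  have "card {u, v} \<le> card V" using assms by (intro card_mono) auto
  then show ?thesis using assms(4) by simp
qed

lemma bij_betw_atLeast0LessThan_fixing:
  assumes "finite V" "card V = n" "u \<in> V" "v \<in> V" "u \<noteq> v"
  obtains f where "bij_betw f V {0..<n}" "f u = n - 1" "f v = 0"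
proof -
  obtain h where h: "bij_betw h V {0..<n}"
    using finite_same_card_bij[of V "{0..<n}"] assms(1,2) by auto
  have "2 \<le> n" using card_ge_2_if_distinct[OF assms(1,3-5)] assms(2) by simp
  have hu: "h u \<in> {0..<n}" using bij_betwE[OF h] assms(3) by blast
  define h' where "h' = Transposition.transpose (h u) (n - 1) \<circ> h"
  have h': "bij_betw h' V {0..<n}"
    unfolding h'_def using \<open>2 \<le> n\<close> hu by (intro bij_betw_trans[OF h]) simp
  have "h' u = n - 1" unfolding h'_def by simp
  have h'v: "h' v \<in> {0..<n}" "h' v \<noteq> n - 1"
    using bij_betwE[OF h'] inj_onD[OF bij_betw_imp_inj_on[OF h'], of u v] assms(3-5) \<open>h' u = n - 1\<close>
    by auto
  define f where "f = Transposition.transpose (h' v) 0 \<circ> h'"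
  have "bij_betw f V {0..<n}"
    unfolding f_def using \<open>2 \<le> n\<close> h'v by (intro bij_betw_trans[OF h']) simp
  moreover have "f u = n - 1" unfolding f_def using \<open>h' u = n - 1\<close> h'v \<open>2 \<le> n\<close> by simp
  moreover have "f v = 0" unfolding f_def by simp
  ultimately show ?thesis by (rule that)
qed

lemma Kn_k_edges_1_iff:
  assumes "2 \<le> n" "a < n" "b < n"
  shows "{a, b} \<in> Kn_k_edges n 1 \<longleftrightarrow> a \<noteq> b \<and> ((a < n - 1 \<and> b < n - 1) \<or> {a, b} = {0, n - 1})"
  using assms unfolding Kn_k_edges_def by (auto simp: doubleton_eq_iff) (metis linorder_neqE_nat)+

lemma graph_iso_Kn_1:
  assumes "finite V" "card V = n" "u \<in> V" "v \<in> V" "u \<noteq> v"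
    and E: "two_cliques_bridge V {u} u v E"
  shows "graph_iso V E (Kn_k_vertices n) (Kn_k_edges n 1)"
proof -
  obtain f where f: "bij_betw f V {0..<n}" "f u = n - 1" "f v = 0"
    using bij_betw_atLeast0LessThan_fixing[OF assms(1-5)] .
  have "2 \<le> n" using card_ge_2_if_distinct[OF assms(1,3-5)] assms(2) by simp
  have f_lt: "f p < n" if "p \<in> V" for p using bij_betwE[OF f(1)] that by auto
  have f_eq: "f p = f q \<longleftrightarrow> p = q" if "p \<in> V" "q \<in> V" for p q
    using inj_on_eq_iff[OF bij_betw_imp_inj_on[OF f(1)] that] .
  have f_top: "f p < n - 1 \<longleftrightarrow> p \<noteq> u" if "p \<in> V" for p
    using f_lt[OF that] f_eq[OF that assms(3)] f(2) by auto
  have f_u: "f p = n - 1 \<longleftrightarrow> p = u" and f_v: "f p = 0 \<longleftrightarrow> p = v" if "p \<in> V" for p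
    using f_eq[OF that assms(3)] f_eq[OF that assms(4)] f(2,3) by auto
  have "{p, q} \<in> E \<longleftrightarrow> {f p, f q} \<in> Kn_k_edges n 1" if pq: "p \<in> V" "q \<in> V" for p q
  proof -
    have "{f p, f q} = {0, n - 1} \<longleftrightarrow> {p, q} = {u, v}"
      unfolding doubleton_eq_iff using f_u[OF pq(1)] f_u[OF pq(2)] f_v[OF pq(1)] f_v[OF pq(2)]
      by auto
    then show ?thesis
      using E pq f_eq f_top Kn_k_edges_1_iff[OF \<open>2 \<le> n\<close> f_lt f_lt] unfolding two_cliques_bridge_def
      by auto
  qed
  then show ?thesis
    unfolding graph_iso_def Kn_k_vertices_def using f(1) by blast
qed

lemma same_side_edge_if_abc_maximal:
  assumes simple: "simple_graph V E" and "2 \<le> card V" "graph_connected V E"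
    and "{u, v} \<in> E" "u \<in> V" "u \<in> A" "v \<in> V" "v \<notin> A"
    and closed: "\<And>p q. {p, q} \<in> E - {{u, v}} \<Longrightarrow> p \<in> A \<longleftrightarrow> q \<in> A"
    and maximal: "\<And>E'. simple_graph V E' \<Longrightarrow> edge_connectivity V E' = 1 \<Longrightarrow>
      abc_index E' \<le> abc_index E"
    and xy: "x \<in> V" "y \<in> V" "x \<noteq> y" "x \<in> A \<longleftrightarrow> y \<in> A"
  shows "{x, y} \<in> E"
proof (rule ccontr)
  assume "{x, y} \<notin> E"
  let ?E' = "insert {x, y} E"
  have simple': "simple_graph V ?E'" using simple xy unfolding simple_graph_def by blast
  moreover have "edge_connectivity V ?E' = 1"
  proof (rule edge_connectivity_eq_1I[OF simple' _ insertI2[OF assms(4)]])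
    show "graph_connected V ?E'" using graph_connected_mono[OF assms(3)] by blast
    have "p \<in> A \<longleftrightarrow> q \<in> A" if "{p, q} \<in> ?E' - {{u, v}}" for p q
    proof (cases "{p, q} = {x, y}")
      case True
      then show ?thesis using xy(4) by (auto simp: doubleton_eq_iff)
    next
      case False
      then show ?thesis using that closed[of p q] by blast
    qed
    from not_graph_connected_if_closed[OF this assms(5,6,7,8)]
    show "\<not> graph_connected V (?E' - {{u, v}})" .
  qed
  ultimately have "abc_index ?E' \<le> abc_index E" by (rule maximal)
  moreover have "abc_index E < abc_index ?E'"
    using abc_index_insert_edge_less[OF simple xy(3) \<open>{x, y} \<notin> E\<close>]
      degree_ge_1_if_connected[OF simple assms(2,3)] xy(1,2) by blast
  ultimately show False by simp
qed

section \<open>Bounds on the ABC index\<close>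

text \<open>For s \<ge> 3 this is (s choose 2) times the weight of an edge between two vertices of
  degree s - 1; a single edge (s = 2) weighs at most 1.\<close>
definition abc_clique_bound :: "nat \<Rightarrow> real" where
  "abc_clique_bound s = (if s = 2 then 1 else real s * sqrt (2 * (real s - 2)) / 2)"

lemma real_choose_2: "real (s choose 2) = real s * (real s - 1) / 2"
  by (induction s) (auto simp: numeral_2_eq_2 field_simps)

lemma choose_2_mult_abc_weight_diag:
  assumes "2 \<le> s"
  shows "real (s choose 2) * abc_weight (real s - 1) (real s - 1) = real s * sqrt (2 * (real s - 2)) / 2"
  using assms abc_weight_diag[of "real s - 1"] unfolding real_choose_2
  by (simp add: field_simps)

lemma abc_sum_clique_le:
  assumes "simple_graph V E" "card A = s" "2 \<le> s"
    and clique: "\<And>p q. p \<in> A \<Longrightarrow> q \<in> A \<Longrightarrow> p \<noteq> q \<Longrightarrow> {p, q} \<in> E"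
  shows "(\<Sum>e\<in>{e \<in> E. e \<subseteq> A}. abc_term E e) \<le> abc_clique_bound s"
proof -
  have finE: "finite E" using simple_graph_finite_edges[OF assms(1)] .
  have finA: "finite A" using assms(2,3) card.infinite by force
  define w where "w = (if s = 2 then 1 else abc_weight (real s - 1) (real s - 1))"
  have "0 \<le> w" unfolding w_def using assms(3) abc_weight_nonneg[of "real s - 1"] by auto
  have deg: "real s - 1 \<le> real (degree E p)" if "p \<in> A" for p
  proof -
    have "card (A - {p}) \<le> degree E p"
      using finA that clique by (intro card_le_degree[OF finE]) auto
    then show ?thesis using that finA assms(2,3) by simp
  qed
  have term_le: "abc_term E e \<le> w" if e: "e \<in> {e \<in> E. e \<subseteq> A}" for e
  proof -
    from e have "e \<in> E" by simp
    then obtain p q where "e = {p, q}" "p \<noteq> q" "p \<in> V" "q \<in> V"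
      by (rule simple_graph_edgeE[OF assms(1)])
    with e have pq: "e = {p, q}" "p \<noteq> q" "p \<in> A" "q \<in> A" by auto
    then have "abc_term E e = abc_weight (degree E p) (degree E q)"
      using abc_term_doubleton by simp
    also have "\<dots> \<le> w"
      using deg[OF pq(3)] deg[OF pq(4)] assms(3) abc_weight_le_1 abc_weight_antimono
      unfolding w_def by auto
    finally show ?thesis .
  qed
  have "{e \<in> E. e \<subseteq> A} \<subseteq> {e. e \<subseteq> A \<and> card e = 2}"
  proof
    fix e assume e: "e \<in> {e \<in> E. e \<subseteq> A}"
    then have "e \<in> E" by simp
    then obtain p q where "e = {p, q}" "p \<noteq> q" "p \<in> V" "q \<in> V"
      by (rule simple_graph_edgeE[OF assms(1)])
    with e show "e \<in> {e. e \<subseteq> A \<and> card e = 2}" by simp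
  qed
  then have "card {e \<in> E. e \<subseteq> A} \<le> s choose 2"
    using card_mono[of "{e. e \<subseteq> A \<and> card e = 2}"] n_subsets[OF finA, of 2] finA assms(2) by simp
  then have "real (card {e \<in> E. e \<subseteq> A}) * w \<le> real (s choose 2) * w"
    using \<open>0 \<le> w\<close> by (intro mult_right_mono) auto
  moreover have "real (s choose 2) * w = abc_clique_bound s"
    unfolding w_def abc_clique_bound_def using choose_2_mult_abc_weight_diag[OF assms(3)] by simp
  moreover have "(\<Sum>e\<in>{e \<in> E. e \<subseteq> A}. abc_term E e) \<le> real (card {e \<in> E. e \<subseteq> A}) * w"
    using term_le by (rule sum_bounded_above)
  ultimately show ?thesis by linarith
qed

lemma degree_ge_2_in_two_cliques_bridge:
  assumes "simple_graph V E" "two_cliques_bridge V A u v E" "u \<in> A" "A \<subseteq> V" "v \<in> V" "v \<notin> A"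
    and "2 \<le> card A"
  shows "2 \<le> degree E u"
proof -
  have finA: "finite A" using assms(7) card.infinite by force
  have "card (insert v (A - {u})) \<le> degree E u"
  proof (rule card_le_degree[OF simple_graph_finite_edges[OF assms(1)]])
    show "{u, q} \<in> E" if "q \<in> insert v (A - {u})" for q
      using assms(2-6) that unfolding two_cliques_bridge_def by auto
  qed (use finA assms(3,6) in auto)
  moreover have "card (insert v (A - {u})) = card A"
    using finA assms(3,6,7) by (simp add: card_Diff_singleton)
  ultimately show ?thesis using assms(7) by simp
qed

lemma abc_index_two_cliques_bridge_le:
  assumes simple: "simple_graph V E" and E: "two_cliques_bridge V A u v E"
    and "A \<subseteq> V" "u \<in> A" "v \<in> V" "v \<notin> A" "2 \<le> card A" "2 \<le> card (V - A)"
  shows "abc_index E \<le> abc_clique_bound (card A) + abc_clique_bound (card (V - A)) + 1 / sqrt 2"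
proof -
  define EA EB where "EA = {e \<in> E. e \<subseteq> A}" and "EB = {e \<in> E. e \<subseteq> V - A}"
  have finE: "finite E" using simple_graph_finite_edges[OF simple] .
  have "u \<in> V" using assms(3,4) by blast
  have uv: "u \<noteq> v" "{u, v} \<in> E"
    using E \<open>u \<in> V\<close> assms(4-6) unfolding two_cliques_bridge_def by blast+
  have "e \<in> insert {u, v} (EA \<union> EB)" if "e \<in> E" for e
  proof -
    obtain p q where pq: "e = {p, q}" "p \<noteq> q" "p \<in> V" "q \<in> V"
      using simple_graph_edgeE[OF simple \<open>e \<in> E\<close>] .
    then have "(p \<in> A \<longleftrightarrow> q \<in> A) \<or> e = {u, v}"
      using E that unfolding two_cliques_bridge_def by blast
    then show ?thesis using that pq unfolding EA_def EB_def by auto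
  qed
  then have "E = insert {u, v} (EA \<union> EB)" using uv unfolding EA_def EB_def by blast
  moreover have "{u, v} \<notin> EA \<union> EB" using assms(4,6) unfolding EA_def EB_def by blast
  moreover have "EA \<inter> EB = {}"
    using simple unfolding simple_graph_def EA_def EB_def by blast
  moreover have "finite EA" "finite EB" using finE unfolding EA_def EB_def by auto
  ultimately have "abc_index E = abc_term E {u, v} + (\<Sum>e\<in>EA. abc_term E e) + (\<Sum>e\<in>EB. abc_term E e)"
    unfolding abc_index_eq_sum by (simp add: sum.union_disjoint)
  moreover have "(\<Sum>e\<in>EA. abc_term E e) \<le> abc_clique_bound (card A)"
    unfolding EA_def using E assms(3,7)
    by (intro abc_sum_clique_le[OF simple refl]) (auto simp: two_cliques_bridge_def)
  moreover have "(\<Sum>e\<in>EB. abc_term E e) \<le> abc_clique_bound (card (V - A))"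
    unfolding EB_def using E assms(8)
    by (intro abc_sum_clique_le[OF simple refl]) (auto simp: two_cliques_bridge_def)
  moreover have "abc_term E {u, v} \<le> 1 / sqrt 2"
  proof -
    have "2 \<le> degree E u"
      using degree_ge_2_in_two_cliques_bridge[OF simple E assms(4,3,5,6,7)] .
    moreover have "2 \<le> degree E v"
      using degree_ge_2_in_two_cliques_bridge[OF simple two_cliques_bridge_swap[OF E]] assms
      by auto
    ultimately show ?thesis using abc_term_doubleton[OF uv(1)] abc_weight_le_inv_sqrt2 by simp
  qed
  ultimately show ?thesis by linarith
qed

lemma sqrt_le_tangent:
  assumes "0 \<le> x" "0 < y"
  shows "sqrt x \<le> (x + y) / (2 * sqrt y)"
proof -
  have "2 * sqrt x * sqrt y \<le> x + y"
    using sum_squares_ge_zero[of "sqrt x - sqrt y" 0] assms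
    by (simp add: power2_eq_square algebra_simps)
  then show ?thesis using assms by (simp add: field_simps)
qed

lemma sqrt_2_lt_mult_sqrt_diff:
  assumes "3 \<le> b"
  shows "sqrt 2 < b * sqrt b - b * sqrt (b - 2)"
proof -
  have "b * sqrt (b - 2) = sqrt (b\<^sup>2 * (b - 2))" using assms by (simp add: real_sqrt_mult)
  also have "\<dots> \<le> sqrt ((b - 1)\<^sup>2 * b)"
    using assms by (simp add: power2_eq_square algebra_simps)
  also have "\<dots> = (b - 1) * sqrt b" using assms by (simp add: real_sqrt_mult)
  finally have "sqrt b \<le> b * sqrt b - b * sqrt (b - 2)" by (simp add: algebra_simps)
  moreover have "sqrt 2 < sqrt b" using assms by simp
  ultimately show ?thesis by linarith
qed

lemma abc_clique_bound_eq:
  "3 \<le> s \<Longrightarrow> abc_clique_bound s = sqrt 2 / 2 * (real s * sqrt (real s - 2))"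
  unfolding abc_clique_bound_def by (simp add: real_sqrt_mult[of 2, symmetric])

lemma abc_clique_bound_2_add_le:
  assumes "2 \<le> b"
  shows "abc_clique_bound 2 + abc_clique_bound b \<le> sqrt 2 / 2 * (real b * sqrt (real b))"
proof (cases "b = 2")
  case True
  then show ?thesis unfolding abc_clique_bound_def by (simp add: real_sqrt_mult[symmetric])
next
  case False
  then have "3 \<le> real b" using assms by simp
  from mult_strict_left_mono[OF sqrt_2_lt_mult_sqrt_diff[OF this], of "sqrt 2 / 2"]
  have "1 < sqrt 2 / 2 * (real b * sqrt (real b) - real b * sqrt (real b - 2))" by simp
  then show ?thesis
    using abc_clique_bound_eq[of b] \<open>3 \<le> real b\<close> unfolding abc_clique_bound_def
    by (simp add: algebra_simps)
qed

text \<open>The case a, b \<ge> 3 bounds each sqrt(s - 2) by its tangent at y = a + b - 2.\<close>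
lemma abc_clique_bound_add_le:
  assumes "2 \<le> a" "2 \<le> b"
  shows "abc_clique_bound a + abc_clique_bound b
    \<le> sqrt 2 / 2 * ((real (a + b) - 2) * sqrt (real (a + b) - 2))"
proof -
  consider "a = 2" | "b = 2" | "3 \<le> a" "3 \<le> b" using assms by linarith
  then show ?thesis
  proof cases
    case 1
    then show ?thesis using abc_clique_bound_2_add_le[OF assms(2)] by simp
  next
    case 2
    then show ?thesis using abc_clique_bound_2_add_le[OF assms(1)] by (simp add: add.commute)
  next
    case 3
    define y where "y = real (a + b) - 2"
    have "0 < y" unfolding y_def using assms by simp
    have tangent: "real s * sqrt (real s - 2) \<le> real s * ((real s - 2 + y) / (2 * sqrt y))"
      if "3 \<le> s" for s
      using sqrt_le_tangent[of "real s - 2" y] that \<open>0 < y\<close> by (intro mult_left_mono) auto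
    have "real a * sqrt (real a - 2) + real b * sqrt (real b - 2)
        \<le> real a * ((real a - 2 + y) / (2 * sqrt y)) + real b * ((real b - 2 + y) / (2 * sqrt y))"
      using tangent[OF 3(1)] tangent[OF 3(2)] by linarith
    also have "\<dots> = (real a * (real a - 2 + y) + real b * (real b - 2 + y)) / (2 * sqrt y)"
      using \<open>0 < y\<close> by (simp add: field_simps)
    also have "\<dots> \<le> y * sqrt y"
    proof -
      have "real a * (real a - 2 + y) + real b * (real b - 2 + y) \<le> 2 * y * y"
        using mult_nonneg_nonneg[of "real a - 2" "real b - 2"] 3
        unfolding y_def by (simp add: algebra_simps)
      also have "\<dots> = y * sqrt y * (2 * sqrt y)" using \<open>0 < y\<close> by (simp add: algebra_simps)
      finally show ?thesis using \<open>0 < y\<close> by (simp add: divide_simps)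
    qed
    finally have sum_le: "real a * sqrt (real a - 2) + real b * sqrt (real b - 2) \<le> y * sqrt y" .
    have "abc_clique_bound a + abc_clique_bound b
        = sqrt 2 / 2 * (real a * sqrt (real a - 2) + real b * sqrt (real b - 2))"
      using abc_clique_bound_eq[OF 3(1)] abc_clique_bound_eq[OF 3(2)] by (simp add: algebra_simps)
    also have "\<dots> \<le> sqrt 2 / 2 * (y * sqrt y)" using sum_le by (intro mult_left_mono) auto
    finally show ?thesis unfolding y_def .
  qed
qed

text \<open>K_n(1) realised on the vertex set V, with pendant vertex x attached to y.\<close>
definition pendant_clique :: "'a set \<Rightarrow> 'a \<Rightarrow> 'a \<Rightarrow> 'a set set" where
  "pendant_clique V x y = insert {x, y} {e. e \<subseteq> V - {x} \<and> card e = 2}"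

lemma pendant_clique_doubleton_mem:
  "p \<in> V \<Longrightarrow> q \<in> V \<Longrightarrow> p \<noteq> x \<Longrightarrow> q \<noteq> x \<Longrightarrow> p \<noteq> q \<Longrightarrow> {p, q} \<in> pendant_clique V x y"
  unfolding pendant_clique_def by auto

lemma simple_graph_pendant_clique:
  assumes "finite V" "x \<in> V" "y \<in> V" "x \<noteq> y"
  shows "simple_graph V (pendant_clique V x y)"
  using assms unfolding simple_graph_def pendant_clique_def by (auto simp: card_2_iff)

lemma edge_connectivity_pendant_clique:
  assumes "finite V" "x \<in> V" "y \<in> V" "x \<noteq> y"
  shows "edge_connectivity V (pendant_clique V x y) = 1"
proof (rule edge_connectivity_eq_1I[OF simple_graph_pendant_clique[OF assms]])
  let ?H = "pendant_clique V x y"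
  have "{p, y} \<in> ?H" if "p \<in> V" "p \<noteq> y" for p
    using pendant_clique_doubleton_mem[OF that(1) assms(3) _ _ that(2)] assms(4)
    unfolding pendant_clique_def by (cases "p = x") auto
  then have to_y: "(p, y) \<in> (adj_rel ?H)\<^sup>*" "(y, p) \<in> (adj_rel ?H)\<^sup>*" if "p \<in> V" for p
    using that unfolding adj_rel_def by (cases "p = y"; auto simp: insert_commute)+
  show "graph_connected V ?H"
    unfolding graph_connected_iff using to_y rtrancl_trans by metis
  show "{x, y} \<in> ?H" unfolding pendant_clique_def by simp
  have "p \<in> {x} \<longleftrightarrow> q \<in> {x}" if "{p, q} \<in> ?H - {{x, y}}" for p q
    using that unfolding pendant_clique_def by auto
  from not_graph_connected_if_closed[of "?H - {{x, y}}" "{x}" x V y, OF this assms(2) _ assms(3)] assms(4)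
  show "\<not> graph_connected V (?H - {{x, y}})" by simp
qed

lemma abc_index_pendant_clique_ge:
  assumes "finite V" "card V = n" "4 \<le> n" "x \<in> V" "y \<in> V" "x \<noteq> y"
  shows "sqrt 2 / 2 * ((real n - 2) * sqrt (real n - 2)) + abc_weight 1 (real n - 1)
    \<le> abc_index (pendant_clique V x y)"
proof -
  let ?H = "pendant_clique V x y"
  define C where "C = {e. e \<subseteq> V - {x} \<and> card e = 2}"
  have H: "?H = insert {x, y} C" unfolding pendant_clique_def C_def ..
  have simple: "simple_graph V ?H" using simple_graph_pendant_clique[OF assms(1,4-6)] .
  have finH: "finite ?H" using simple_graph_finite_edges[OF simple] .
  have "{x, y} \<notin> C" unfolding C_def by blast
  have "degree ?H x = 1"
  proof -
    have "{e \<in> ?H. x \<in> e} = {{x, y}}" unfolding H C_def by blast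
    then show ?thesis unfolding degree_def by simp
  qed
  moreover have "degree ?H y = n - 1"
  proof -
    have "card (V - {y}) \<le> degree ?H y"
    proof (rule card_le_degree[OF finH])
      show "{y, q} \<in> ?H" if "q \<in> V - {y}" for q
        using that pendant_clique_doubleton_mem[of y V q x y] assms(4-6)
        by (cases "q = x") (auto simp: insert_commute pendant_clique_def)
    qed (use assms(1) in auto)
    then show ?thesis using degree_le_card_minus_1[OF simple assms(5)] assms(1,2,5) by simp
  qed
  ultimately have "abc_term ?H {x, y} = abc_weight 1 (real n - 1)"
    using abc_term_doubleton[OF assms(6)] assms(3) by simp
  moreover have "abc_weight (real n - 1) (real n - 1) \<le> abc_term ?H e" if "e \<in> C" for e
  proof -
    obtain p q where pq: "e = {p, q}" "p \<noteq> q" using \<open>e \<in> C\<close> unfolding C_def by (auto simp: card_2_iff)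
    have deg: "2 \<le> real (degree ?H r) \<and> real (degree ?H r) \<le> real n - 1" if "r \<in> e" for r
    proof -
      have r: "r \<in> V" "r \<noteq> x" using \<open>e \<in> C\<close> that unfolding C_def by auto
      have "card (V - {x, r}) \<le> degree ?H r"
        using pendant_clique_doubleton_mem[OF r(1) _ r(2)] assms(1)
        by (intro card_le_degree[OF finH]) auto
      moreover have "card (V - {x, r}) = n - 2" using assms(1,2,4) r by (simp add: card_Diff_subset)
      ultimately show ?thesis using degree_le_card_minus_1[OF simple r(1)] assms(2,3) by auto
    qed
    then show ?thesis
      using pq abc_weight_antimono[of "degree ?H p" "real n - 1" "degree ?H q" "real n - 1"]
        abc_term_doubleton[OF pq(2)] by simp
  qed
  then have "real (card C) * abc_weight (real n - 1) (real n - 1) \<le> (\<Sum>e\<in>C. abc_term ?H e)"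
    by (rule sum_bounded_below)
  moreover have "real (card C) * abc_weight (real n - 1) (real n - 1)
      = sqrt 2 / 2 * ((real n - 2) * sqrt (real n - 2))"
  proof -
    have "card C = (n - 1) choose 2"
      unfolding C_def using n_subsets[of "V - {x}" 2] assms(1,2,4) by simp
    then have cC: "real (card C) = (real n - 1) * (real n - 2) / 2"
      using real_choose_2[of "n - 1"] assms(3) by (simp add: of_nat_diff)
    have wd: "abc_weight (real n - 1) (real n - 1) = sqrt 2 * sqrt (real n - 2) / (real n - 1)"
      using abc_weight_diag[of "real n - 1"] assms(3) by (simp add: real_sqrt_mult[symmetric])
    show ?thesis unfolding cC wd using assms(3) by (simp add: field_simps)
  qed
  moreover have "abc_index ?H = abc_term ?H {x, y} + (\<Sum>e\<in>C. abc_term ?H e)"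
    unfolding abc_index_eq_sum H using finH \<open>{x, y} \<notin> C\<close> H by simp
  ultimately show ?thesis by linarith
qed

lemma abc_clique_bounds_lt_pendant_clique:
  assumes "2 \<le> a" "2 \<le> b"
  shows "abc_clique_bound a + abc_clique_bound b + 1 / sqrt 2
    < sqrt 2 / 2 * ((real (a + b) - 2) * sqrt (real (a + b) - 2)) + abc_weight 1 (real (a + b) - 1)"
proof -
  have "1 / 2 < (real (a + b) - 2) / (real (a + b) - 1)" using assms by (simp add: field_simps)
  then have "sqrt (1 / 2) < sqrt ((real (a + b) - 2) / (real (a + b) - 1))"
    by (simp only: real_sqrt_less_iff)
  then have "1 / sqrt 2 < abc_weight 1 (real (a + b) - 1)"
    unfolding abc_weight_1_left by (simp add: real_sqrt_divide algebra_simps)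
  then show ?thesis using abc_clique_bound_add_le[OF assms] by linarith
qed

lemma abc_index_two_cliques_bridge_less_pendant_clique:
  assumes "simple_graph V E" "two_cliques_bridge V A u v E"
    and A: "A \<subseteq> V" "u \<in> A" "v \<in> V" "v \<notin> A" "2 \<le> card A" "2 \<le> card (V - A)"
  shows "abc_index E < abc_index (pendant_clique V u v)"
proof -
  have finV: "finite V" using assms(1) unfolding simple_graph_def by blast
  have "card A + card (V - A) = card V"
    using card_Diff_subset[OF finite_subset[OF A(1) finV] A(1)] card_mono[OF finV A(1)] by simp
  then show ?thesis
    using abc_index_two_cliques_bridge_le[OF assms] abc_clique_bounds_lt_pendant_clique[OF A(5,6)]
      abc_index_pendant_clique_ge[OF finV refl _ _ A(3)] A
    by fastforce
qed

lemma abc_maximal_two_cliques_bridgeE: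
  assumes simple: "simple_graph V E" and "2 \<le> card V" "edge_connectivity V E = 1"
    and maximal: "\<And>E'. simple_graph V E' \<Longrightarrow> edge_connectivity V E' = 1 \<Longrightarrow>
      abc_index E' \<le> abc_index E"
  obtains A u v where "A \<subseteq> V" "u \<in> A" "v \<in> V" "v \<notin> A" "two_cliques_bridge V A u v E"
proof -
  obtain e where conn: "graph_connected V E" and "e \<in> E" "\<not> graph_connected V (E - {e})"
    using edge_connectivity_eq_1D[OF assms(2,3)] by blast
  then obtain A u v where A: "A \<subseteq> V" "u \<in> A" "v \<in> V" "v \<notin> A" and "e = {u, v}"
    and closed: "\<And>p q. {p, q} \<in> E - {{u, v}} \<Longrightarrow> p \<in> A \<longleftrightarrow> q \<in> A"
    using bridge_sidesE[OF simple conn] by metis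
  have uv: "u \<in> V" "{u, v} \<in> E" using A \<open>e \<in> E\<close> \<open>e = {u, v}\<close> by auto
  have "two_cliques_bridge V A u v E"
    using same_side_edge_if_abc_maximal[OF simple assms(2) conn uv(2,1) A(2-4) closed maximal]
    by (intro two_cliques_bridgeI[OF simple uv(2) A(2,4) closed]) auto
  with A show ?thesis by (rule that)
qed

lemma singleton_or_card_ge_2_cases:
  assumes "finite V" "A \<subseteq> V" "u \<in> A" "v \<in> V" "v \<notin> A"
  obtains "A = {u}" | "V - A = {v}" | "2 \<le> card A" "2 \<le> card (V - A)"
proof -
  have "finite A" "finite (V - A)" using assms(1,2) finite_subset by auto
  moreover have "A \<noteq> {}" "V - A \<noteq> {}" using assms(3-5) by blast+
  ultimately have "1 \<le> card A" "1 \<le> card (V - A)" by (simp_all add: Suc_le_eq card_gt_0_iff)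
  show ?thesis
  proof (cases "card A = 1")
    case True
    then show ?thesis using that(1) assms(3) by (metis card_1_singletonE singletonD)
  next
    case False
    show ?thesis
    proof (cases "card (V - A) = 1")
      case True
      then show ?thesis using that(2) assms(4,5) by (metis DiffI card_1_singletonE singletonD)
    next
      case False
      then show ?thesis using that(3) \<open>card A \<noteq> 1\<close> \<open>1 \<le> card A\<close> \<open>1 \<le> card (V - A)\<close> by simp
    qed
  qed
qed

theorem theorem4:
  fixes n :: nat and V :: "'a set" and E :: "'a set set"
  assumes "n \<ge> 2"
    and "simple_graph V E" and "card V = n" and "edge_connectivity V E = 1"
    and "\<And>(V' :: 'a set) E'. simple_graph V' E' \<Longrightarrow> card V' = n \<Longrightarrow>
            edge_connectivity V' E' = 1 \<Longrightarrow> abc_index E' \<le> abc_index E"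
  shows "graph_iso V E (Kn_k_vertices n) (Kn_k_edges n 1)"
proof -
  have finV: "finite V" and card2: "2 \<le> card V"
    using assms(1-3) unfolding simple_graph_def by auto
  have maximal: "\<And>E'. simple_graph V E' \<Longrightarrow> edge_connectivity V E' = 1 \<Longrightarrow>
      abc_index E' \<le> abc_index E"
    using assms(3,5) by blast
  obtain A u v where A: "A \<subseteq> V" "u \<in> A" "v \<in> V" "v \<notin> A"
    and E: "two_cliques_bridge V A u v E"
    using abc_maximal_two_cliques_bridgeE[OF assms(2) card2 assms(4) maximal] .
  have "u \<in> V" "u \<noteq> v" using A by auto
  consider "A = {u}" | "V - A = {v}" | "2 \<le> card A" "2 \<le> card (V - A)"
    using finV A by (rule singleton_or_card_ge_2_cases)
  then show ?thesis
  proof cases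
    case 1
    with E show ?thesis using graph_iso_Kn_1[OF finV assms(3) \<open>u \<in> V\<close> A(3) \<open>u \<noteq> v\<close>] by simp
  next
    case 2
    with two_cliques_bridge_swap[OF E] show ?thesis
      using graph_iso_Kn_1[OF finV assms(3) A(3) \<open>u \<in> V\<close> \<open>u \<noteq> v\<close>[symmetric]] by simp
  next
    case 3
    from abc_index_two_cliques_bridge_less_pendant_clique[OF assms(2) E A 3]
      maximal[OF simple_graph_pendant_clique edge_connectivity_pendant_clique]
      finV \<open>u \<in> V\<close> \<open>u \<noteq> v\<close> A(3)
    show ?thesis by fastforce
  qed
qed

end
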